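(* If Dynamic A* (with \texttt{reeval} true or false) uses a dyn-admissible, dyn-monotonic and dyn-consistent dynamic heuristic, then the sequence of values $\hat g+\hat h$ of the entries $\langle s,\hat g,\hat h\rangle$ popped from Open, in the order they are popped, is non-decreasing.
   Context: A transition system is $\mathcal T=\langle S,L,c,T,s_I,S_G\rangle$ with finite states $S$, finite labels $L$, cost function $c:L\to\mathbb R_{\ge0}$, transitions $T\subseteq S\times L\times S$, initial state $s_I$, goal states $S_G\subseteq S$; $h^*(s)$ is the minimal cost of a path from $s$ to a goal ($\infty$ if none). An information source $\sigma$ consists of a set $\mathcal I_\sigma$, $\iota_0^\sigma\in\mathcal I_\sigma$, $\mathrm{update}_\sigma:\mathcal I_\sigma\times T\to\mathcal I_\sigma$, $\mathrm{refine}_\sigma:\mathcal I_\sigma\times S\to\mathcal I_\sigma$. Reachable information: $\iota_n$ is reachable if obtained from $\iota_0^\sigma$ by a sequence of refine steps on states and update steps on transitions $e_1,\dots,e_n$, where each refined state and each origin of an updated transition is $s_I$ or the target of an earlier updated transition. A dynamic heuristic over $\sigma$ is $h:S\times\mathcal I_\sigma\to\mathbb R_{\ge0}\cup\{\infty\}$. It is dyn-admissible if $h(s,\iota)\le h^*(s)$; dyn-consistent if $h(s,\iota)\le c(\ell)+h(s',\iota)$ for all $\langle s,\ell,s'\rangle\in T$; each for all states and all reachable $\iota$; and dyn-monotonic if $h(s,\iota)\le h(s,\mathrm{update}_\sigma(\iota,t))$ and $h(s,\iota)\le h(s,\mathrm{refine}_\sigma(\iota,s'))$ for all reachable $\iota$,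 all $s,s'\in S$, all $t\in T$. Parent source $\sigma_p$: $\mathcal I_{\sigma_p}$ = partial functions $S\rightharpoonup\mathbb R_{\ge0}\times(T\cup\{\bot\})$; $\iota_0=\{s_I\mapsto\langle0,\bot\rangle\}$; refine is the identity; $\mathrm{update}(\iota,\langle s,\ell,s'\rangle)$ with $\iota(s)=\langle g,\cdot\rangle$ changes only $s'$, setting it to $\langle g+c(\ell),\langle s,\ell,s'\rangle\rangle$ if $\iota(s')$ is undefined or has $g$-component $\ge g+c(\ell)$, otherwise unchanged. Dynamic A* takes $\mathcal T$, sources $\sigma_p,\sigma_h$, a dynamic heuristic $h$ over $\sigma_h$ and a Boolean flag \texttt{reeval}. Notation: at any moment $g(s)$ is the $g$-component of the current $\mathcal I(\sigma_p)(s)$ and $h(s)$ denotes $h(s,\mathcal I(\sigma_h))$ for the current $\mathcal I(\sigma_h)$. Open is a priority queue of entries $\langle s,g,h\rangle$ (duplicates allowed), popped by minimal stored value $g+h$ (ties arbitrary). Algorithm: 1. $\mathcal I(\sigma):=\iota_0^\sigma$ for both sources; $S_{\mathrm{known}}:=\{s_I\}$; Closed $:=\emptyset$; Open empty. If $h(s_I)<\infty$ insert $\langle s_I,g(s_I),h(s_I)\rangle$. 2. While Open is nonempty: pop an entry $\langle s,\hat g,\hat h\rangle$ of minimal $\hat g+\hat h$. If $s\in$ Closed, continue with the next iteration. Otherwise set $\mathcal I(\sigma):=\mathrm{refine}_\sigma(\mathcal I(\sigma),s)$ for both sources. If \texttt{reeval} is true and $\hat h<h(s)$: if $h(s)<\infty$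 insert $\langle s,g(s),h(s)\rangle$; continue with the next iteration (this is a re-evaluation). Otherwise add $s$ to Closed ($s$ is expanded). If $s\in S_G$, return the path obtained by following the parent pointers of $\mathcal I(\sigma_p)$ from $s$ back to $s_I$. Otherwise, for each $t=\langle s,\ell,s'\rangle\in T$ in some order: let $old:=g(s')$ if $s'\in S_{\mathrm{known}}$ and undefined otherwise; set $\mathcal I(\sigma):=\mathrm{update}_\sigma(\mathcal I(\sigma),t)$ for both sources; add $s'$ to $S_{\mathrm{known}}$; if $h(s')=\infty$ skip $s'$; else if $old$ is undefined insert $\langle s',g(s'),h(s')\rangle$; else if $old>g(s')$, remove $s'$ from Closed if it is there (reopening) and insert $\langle s',g(s'),h(s')\rangle$. 3. Return "unsolvable". *)

theory Defs
  imports "HOL-Analysis.Analysis" "HOL-Library.Multiset" "HOL-Library.Extended_Real"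
begin

type_synonym ('s,'l) trans = "'s \<times> 'l \<times> 's"

record ('s,'l) tsys =
  St    :: "'s set"
  Lb    :: "'l set"
  cost  :: "'l \<Rightarrow> real"
  Tr    :: "('s,'l) trans set"
  sinit :: 's
  goals :: "'s set"

definition wf_tsys :: "('s,'l) tsys \<Rightarrow> bool" where
  "wf_tsys TS \<longleftrightarrow> finite (St TS) \<and> finite (Lb TS)
     \<and> (\<forall>l\<in>Lb TS. cost TS l \<ge> 0)
     \<and> Tr TS \<subseteq> St TS \<times> Lb TS \<times> St TS
     \<and> sinit TS \<in> St TS \<and> goals TS \<subseteq> St TS"

fun tpath :: "('s,'l) trans set \<Rightarrow> 's \<Rightarrow> ('s,'l) trans list \<Rightarrow> 's \<Rightarrow> bool" where
  "tpath T s [] u \<longleftrightarrow> s = u"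
| "tpath T s ((a,l,b) # ts) u \<longleftrightarrow> (a,l,b) \<in> T \<and> a = s \<and> tpath T b ts u"

definition path_cost :: "('s,'l) tsys \<Rightarrow> ('s,'l) trans list \<Rightarrow> real" where
  "path_cost TS ts = sum_list (map (\<lambda>(a,l,b). cost TS l) ts)"

definition hstar :: "('s,'l) tsys \<Rightarrow> 's \<Rightarrow> ereal" where
  "hstar TS s = (INF ts \<in> {ts. \<exists>u\<in>goals TS. tpath (Tr TS) s ts u}. ereal (path_cost TS ts))"

record ('i,'s,'l) isrc =
  iota0 :: 'i
  upd   :: "'i \<Rightarrow> ('s,'l) trans \<Rightarrow> 'i"
  rfn   :: "'i \<Rightarrow> 's \<Rightarrow> 'i"

inductive reach_info :: "('s,'l) tsys \<Rightarrow> ('i,'s,'l) isrc \<Rightarrow> 'i \<Rightarrow> 's set \<Rightarrow> bool"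
  for TS \<sigma> where
  init: "reach_info TS \<sigma> (iota0 \<sigma>) {sinit TS}"
| refine: "reach_info TS \<sigma> \<iota> R \<Longrightarrow> s \<in> R \<Longrightarrow> reach_info TS \<sigma> (rfn \<sigma> \<iota> s) R"
| update: "reach_info TS \<sigma> \<iota> R \<Longrightarrow> (s,l,s') \<in> Tr TS \<Longrightarrow> s \<in> R
           \<Longrightarrow> reach_info TS \<sigma> (upd \<sigma> \<iota> (s,l,s')) (insert s' R)"

definition reachable_info :: "('s,'l) tsys \<Rightarrow> ('i,'s,'l) isrc \<Rightarrow> 'i \<Rightarrow> bool" where
  "reachable_info TS \<sigma> \<iota> \<longleftrightarrow> (\<exists>R. reach_info TS \<sigma> \<iota> R)"

definition dyn_heuristic :: "('s \<Rightarrow> 'i \<Rightarrow> ereal) \<Rightarrow> bool" where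
  "dyn_heuristic h \<longleftrightarrow> (\<forall>s \<iota>. h s \<iota> \<ge> 0)"

definition dyn_admissible ::
  "('s,'l) tsys \<Rightarrow> ('i,'s,'l) isrc \<Rightarrow> ('s \<Rightarrow> 'i \<Rightarrow> ereal) \<Rightarrow> bool" where
  "dyn_admissible TS \<sigma> h \<longleftrightarrow>
     (\<forall>s\<in>St TS. \<forall>\<iota>. reachable_info TS \<sigma> \<iota> \<longrightarrow> h s \<iota> \<le> hstar TS s)"

definition dyn_consistent ::
  "('s,'l) tsys \<Rightarrow> ('i,'s,'l) isrc \<Rightarrow> ('s \<Rightarrow> 'i \<Rightarrow> ereal) \<Rightarrow> bool" where
  "dyn_consistent TS \<sigma> h \<longleftrightarrow>
     (\<forall>s l s' \<iota>. (s,l,s') \<in> Tr TS \<longrightarrow> reachable_info TS \<sigma> \<iota> \<longrightarrow>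
        h s \<iota> \<le> ereal (cost TS l) + h s' \<iota>)"

definition dyn_monotonic ::
  "('s,'l) tsys \<Rightarrow> ('i,'s,'l) isrc \<Rightarrow> ('s \<Rightarrow> 'i \<Rightarrow> ereal) \<Rightarrow> bool" where
  "dyn_monotonic TS \<sigma> h \<longleftrightarrow>
     (\<forall>\<iota>. reachable_info TS \<sigma> \<iota> \<longrightarrow>
        (\<forall>s\<in>St TS. \<forall>t\<in>Tr TS. h s \<iota> \<le> h s (upd \<sigma> \<iota> t))
      \<and> (\<forall>s\<in>St TS. \<forall>s'\<in>St TS. h s \<iota> \<le> h s (rfn \<sigma> \<iota> s')))"

type_synonym ('s,'l) pinfo = "'s \<Rightarrow> (real \<times> ('s,'l) trans option) option"
  (* None as transition component plays the role of \<bottom> *)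

definition upd_parent :: "('s,'l) tsys \<Rightarrow> ('s,'l) pinfo \<Rightarrow> ('s,'l) trans \<Rightarrow> ('s,'l) pinfo" where
  "upd_parent TS \<iota> t = (case t of (s,l,s') \<Rightarrow>
     (case \<iota> s of None \<Rightarrow> \<iota>
      | Some (g,_) \<Rightarrow>
         (case \<iota> s' of
            None \<Rightarrow> \<iota>(s' \<mapsto> (g + cost TS l, Some t))
          | Some (g',_) \<Rightarrow> if g' \<ge> g + cost TS l then \<iota>(s' \<mapsto> (g + cost TS l, Some t)) else \<iota>)))"

definition parent_src :: "('s,'l) tsys \<Rightarrow> (('s,'l) pinfo,'s,'l) isrc" where
  "parent_src TS = \<lparr> iota0 = [sinit TS \<mapsto> (0, None)], upd = upd_parent TS, rfn = (\<lambda>\<iota> s. \<iota>) \<rparr>"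

definition gval :: "('s,'l) pinfo \<Rightarrow> 's \<Rightarrow> real" where
  "gval \<iota> s = fst (the (\<iota> s))"

type_synonym 's entry = "'s \<times> real \<times> ereal"

definition key :: "'s entry \<Rightarrow> ereal" where
  "key e = (case e of (s,g,h) \<Rightarrow> ereal g + h)"

record ('s,'l,'i) cfg =
  ip     :: "('s,'l) pinfo"
  ih     :: 'i
  known  :: "'s set"
  closed :: "'s set"
  opn    :: "'s entry multiset"
  popped :: "'s entry list"
  finished :: bool

definition astar_init ::
  "('s,'l) tsys \<Rightarrow> ('i,'s,'l) isrc \<Rightarrow> ('s \<Rightarrow> 'i \<Rightarrow> ereal) \<Rightarrow> ('s,'l,'i) cfg" where
  "astar_init TS \<sigma>h h =
     \<lparr> ip = iota0 (parent_src TS), ih = iota0 \<sigma>h, known = {sinit TS}, closed = {},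
       opn = (if h (sinit TS) (iota0 \<sigma>h) < \<infinity>
              then {# (sinit TS, gval (iota0 (parent_src TS)) (sinit TS), h (sinit TS) (iota0 \<sigma>h)) #}
              else {#}),
       popped = [], finished = False \<rparr>"

definition expand_succ ::
  "('s,'l) tsys \<Rightarrow> ('i,'s,'l) isrc \<Rightarrow> ('s \<Rightarrow> 'i \<Rightarrow> ereal) \<Rightarrow> ('s,'l) trans
     \<Rightarrow> ('s,'l,'i) cfg \<Rightarrow> ('s,'l,'i) cfg" where
  "expand_succ TS \<sigma>h h t C = (case t of (s,l,s') \<Rightarrow>
     (let old = (if s' \<in> known C then Some (gval (ip C) s') else None);
          ip' = upd (parent_src TS) (ip C) t;
          ih' = upd \<sigma>h (ih C) t;
          C1 = C\<lparr> ip := ip', ih := ih', known := insert s' (known C) \<rparr>;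
          hv = h s' ih';
          e = (s', gval ip' s', hv)
      in if hv = \<infinity> then C1
         else (case old of
                 None \<Rightarrow> C1\<lparr> opn := opn C1 + {#e#} \<rparr>
               | Some og \<Rightarrow> if og > gval ip' s'
                            then C1\<lparr> closed := closed C1 - {s'}, opn := opn C1 + {#e#} \<rparr>
                            else C1)))"

text \<open>One iteration of the main loop. The popped entry is any entry of minimal key;
  the successors are processed in an arbitrary order (any duplicate-free listing of
  the outgoing transitions).\<close>
inductive astar_step ::
  "('s,'l) tsys \<Rightarrow> ('i,'s,'l) isrc \<Rightarrow> ('s \<Rightarrow> 'i \<Rightarrow> ereal) \<Rightarrow> bool
     \<Rightarrow> ('s,'l,'i) cfg \<Rightarrow> ('s,'l,'i) cfg \<Rightarrow> bool"
  for TS \<sigma>h h reeval where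
  pop_closed:
    "\<not> finished C \<Longrightarrow> (s,g,hh) \<in># opn C \<Longrightarrow> (\<forall>e'\<in>#opn C. key (s,g,hh) \<le> key e')
     \<Longrightarrow> s \<in> closed C
     \<Longrightarrow> astar_step TS \<sigma>h h reeval C
           (C\<lparr> opn := opn C - {#(s,g,hh)#}, popped := popped C @ [(s,g,hh)] \<rparr>)"
| pop_reeval:
    "\<not> finished C \<Longrightarrow> (s,g,hh) \<in># opn C \<Longrightarrow> (\<forall>e'\<in>#opn C. key (s,g,hh) \<le> key e')
     \<Longrightarrow> s \<notin> closed C
     \<Longrightarrow> ih1 = rfn \<sigma>h (ih C) s \<Longrightarrow> ip1 = rfn (parent_src TS) (ip C) s
     \<Longrightarrow> reeval \<Longrightarrow> hh < h s ih1
     \<Longrightarrow> astar_step TS \<sigma>h h reeval C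
           (C\<lparr> ip := ip1, ih := ih1,
               opn := opn C - {#(s,g,hh)#}
                      + (if h s ih1 < \<infinity> then {#(s, gval ip1 s, h s ih1)#} else {#}),
               popped := popped C @ [(s,g,hh)] \<rparr>)"
| pop_goal:
    "\<not> finished C \<Longrightarrow> (s,g,hh) \<in># opn C \<Longrightarrow> (\<forall>e'\<in>#opn C. key (s,g,hh) \<le> key e')
     \<Longrightarrow> s \<notin> closed C
     \<Longrightarrow> ih1 = rfn \<sigma>h (ih C) s \<Longrightarrow> ip1 = rfn (parent_src TS) (ip C) s
     \<Longrightarrow> \<not> (reeval \<and> hh < h s ih1)
     \<Longrightarrow> s \<in> goals TS
     \<Longrightarrow> astar_step TS \<sigma>h h reeval C
           (C\<lparr> ip := ip1, ih := ih1, closed := insert s (closed C),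
               opn := opn C - {#(s,g,hh)#},
               popped := popped C @ [(s,g,hh)], finished := True \<rparr>)"
| pop_expand:
    "\<not> finished C \<Longrightarrow> (s,g,hh) \<in># opn C \<Longrightarrow> (\<forall>e'\<in>#opn C. key (s,g,hh) \<le> key e')
     \<Longrightarrow> s \<notin> closed C
     \<Longrightarrow> ih1 = rfn \<sigma>h (ih C) s \<Longrightarrow> ip1 = rfn (parent_src TS) (ip C) s
     \<Longrightarrow> \<not> (reeval \<and> hh < h s ih1)
     \<Longrightarrow> s \<notin> goals TS
     \<Longrightarrow> distinct ts \<Longrightarrow> set ts = {t \<in> Tr TS. fst t = s}
     \<Longrightarrow> astar_step TS \<sigma>h h reeval C
           (fold (expand_succ TS \<sigma>h h) ts
              (C\<lparr> ip := ip1, ih := ih1, closed := insert s (closed C),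
                  opn := opn C - {#(s,g,hh)#},
                  popped := popped C @ [(s,g,hh)] \<rparr>))"

end

theory Submission imports Defs begin

text \<open>The invariant behind the theorem: every known, unclosed state u with finite heuristic
  value is represented in Open by an entry carrying the current g(u) and a stored h-value
  at most the current h(u). Since h only grows, the minimal key popped for s is therefore
  at most g(s) + h(s). Re-evaluation reinserts s with key g(s) + h(s), and by consistency
  a successor s' inserted during the expansion of s gets key g(s) + c + h(s') \<ge> g(s) + h(s).
  So no entry ever entering Open has a key below one already popped.\<close>

lemma parent_src_simps [simp]:
  "iota0 (parent_src TS) = [sinit TS \<mapsto> (0, None)]"
  "upd (parent_src TS) = upd_parent TS"
  "rfn (parent_src TS) P s = P"
  by (simp_all add: parent_src_def)

lemma upd_parent_other: "u \<noteq> s' \<Longrightarrow> upd_parent TS P (s,l,s') u = P u"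
  by (auto simp: upd_parent_def split: option.splits)

lemma dom_upd_parent:
  "s \<in> dom P \<Longrightarrow> dom (upd_parent TS P (s,l,s')) = insert s' (dom P)"
  by (auto simp: upd_parent_def split: option.splits if_splits)

lemma gval_upd_parent_target:
  "s \<in> dom P \<Longrightarrow> gval (upd_parent TS P (s,l,s')) s' =
     (if s' \<in> dom P \<and> gval P s' < gval P s + cost TS l then gval P s' else gval P s + cost TS l)"
  by (auto simp: upd_parent_def gval_def split: option.splits)

lemma gval_upd_parent_improved:
  assumes "s \<in> dom P" and "s' \<notin> dom P \<or> gval (upd_parent TS P (s,l,s')) s' < gval P s'"
  shows "gval (upd_parent TS P (s,l,s')) s' = gval P s + cost TS l"
  using gval_upd_parent_target[OF assms(1)] assms(2) by (auto split: if_splits)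

lemma gval_upd_parent_source:
  assumes "s \<in> dom P" and "cost TS l \<ge> 0"
  shows "gval P s \<le> gval (upd_parent TS P (s,l,s')) s"
proof (cases "s = s'")
  case True
  then show ?thesis using gval_upd_parent_target[OF assms(1)] assms(2) by auto
qed (simp add: gval_def upd_parent_other)

lemma dyn_monotonic_upd:
  "dyn_monotonic TS \<sigma> h \<Longrightarrow> reach_info TS \<sigma> \<iota> R \<Longrightarrow> u \<in> St TS \<Longrightarrow> t \<in> Tr TS
   \<Longrightarrow> h u \<iota> \<le> h u (upd \<sigma> \<iota> t)"
  unfolding dyn_monotonic_def reachable_info_def by blast

lemma dyn_monotonic_rfn:
  "dyn_monotonic TS \<sigma> h \<Longrightarrow> reach_info TS \<sigma> \<iota> R \<Longrightarrow> u \<in> St TS \<Longrightarrow> s \<in> St TS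
   \<Longrightarrow> h u \<iota> \<le> h u (rfn \<sigma> \<iota> s)"
  unfolding dyn_monotonic_def reachable_info_def by blast

lemma dyn_consistent_trans:
  "dyn_consistent TS \<sigma> h \<Longrightarrow> reach_info TS \<sigma> \<iota> R \<Longrightarrow> (s,l,s') \<in> Tr TS
   \<Longrightarrow> h s \<iota> \<le> ereal (cost TS l) + h s' \<iota>"
  unfolding dyn_consistent_def reachable_info_def by blast

definition open_covers :: "('s \<Rightarrow> 'i \<Rightarrow> ereal) \<Rightarrow> ('s,'l,'i) cfg \<Rightarrow> bool" where
  "open_covers h C \<longleftrightarrow> (\<forall>u \<in> known C - closed C. h u (ih C) < \<infinity> \<longrightarrow>
     (\<exists>hh \<le> h u (ih C). (u, gval (ip C) u, hh) \<in># opn C))"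

definition astar_inv ::
  "('s,'l) tsys \<Rightarrow> ('i,'s,'l) isrc \<Rightarrow> ('s \<Rightarrow> 'i \<Rightarrow> ereal) \<Rightarrow> ('s,'l,'i) cfg \<Rightarrow> bool" where
  "astar_inv TS \<sigma>h h C \<longleftrightarrow>
     reach_info TS \<sigma>h (ih C) (known C)
   \<and> known C \<subseteq> St TS
   \<and> dom (ip C) = known C
   \<and> (\<forall>e \<in># opn C. fst e \<in> known C)
   \<and> open_covers h C
   \<and> sorted (map key (popped C))
   \<and> (\<forall>x \<in> set (popped C). \<forall>e \<in># opn C. key x \<le> key e)"

lemma astar_inv_init: "wf_tsys TS \<Longrightarrow> astar_inv TS \<sigma>h h (astar_init TS \<sigma>h h)"
  unfolding astar_inv_def open_covers_def astar_init_def wf_tsys_def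
  by (auto simp: gval_def intro: reach_info.init)

lemma open_covers_min_key_le:
  assumes "open_covers h C" and "s \<in> known C" and "s \<notin> closed C"
    and "\<forall>e \<in># opn C. key p \<le> key e" and "h s (ih C) \<le> H"
  shows "key p \<le> ereal (gval (ip C) s) + H"
proof (cases "h s (ih C) < \<infinity>")
  case True
  then obtain hh where hh: "hh \<le> h s (ih C)" "(s, gval (ip C) s, hh) \<in># opn C"
    using assms(1-3) unfolding open_covers_def by blast
  have "key p \<le> ereal (gval (ip C) s) + hh" using assms(4) hh(2) by (force simp: key_def)
  also have "\<dots> \<le> ereal (gval (ip C) s) + H" using hh(1) assms(5) by (intro add_left_mono) auto
  finally show ?thesis .
next
  case False
  then show ?thesis using assms(5) by (simp add: top_unique)
qed

lemma open_covers_pop: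
  assumes cov: "open_covers h C" and ks: "known C \<subseteq> St TS" and ps: "fst p = s"
    and ip: "ip C' = ip C" and kn: "known C' = known C"
    and hm: "\<forall>u \<in> St TS. h u (ih C) \<le> h u (ih C')"
    and cl: "closed C - {s} \<subseteq> closed C'"
    and op: "opn C' = opn C - {#p#} + N"
    and cov_s: "s \<notin> closed C' \<Longrightarrow> h s (ih C') < \<infinity> \<Longrightarrow>
                 \<exists>hh \<le> h s (ih C'). (s, gval (ip C) s, hh) \<in># N"
  shows "open_covers h C'"
  unfolding open_covers_def
proof (intro ballI impI)
  fix u assume u: "u \<in> known C' - closed C'" and fin: "h u (ih C') < \<infinity>"
  show "\<exists>hh \<le> h u (ih C'). (u, gval (ip C') u, hh) \<in># opn C'"
  proof (cases "u = s")
    case True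
    then show ?thesis using cov_s u fin ip op by auto
  next
    case False
    have u0: "u \<in> known C - closed C" using u kn cl False by auto
    have hu: "h u (ih C) \<le> h u (ih C')" using hm ks u0 by auto
    have "h u (ih C) < \<infinity>" using hu fin by (rule order.strict_trans1)
    then obtain hh where hh: "hh \<le> h u (ih C)" "(u, gval (ip C) u, hh) \<in># opn C"
      using cov u0 unfolding open_covers_def by blast
    have "(u, gval (ip C) u, hh) \<noteq> p" using False ps by auto
    then have "(u, gval (ip C) u, hh) \<in># opn C - {#p#}" using hh(2) by (simp add: in_diff_count)
    then show ?thesis using hh(1) hu ip op by (auto intro: order.trans)
  qed
qed

text \<open>Common to all four kinds of iterations; for an expansion it yields the configuration
  before the successors are processed.\<close>
lemma astar_inv_pop:
  assumes inv: "astar_inv TS \<sigma>h h C"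
    and p: "p \<in># opn C" "\<forall>e \<in># opn C. key p \<le> key e" "fst p = s"
    and ip: "ip C' = ip C" and kn: "known C' = known C" and pop: "popped C' = popped C @ [p]"
    and ri: "reach_info TS \<sigma>h (ih C') (known C)"
    and hm: "\<forall>u \<in> St TS. h u (ih C) \<le> h u (ih C')"
    and cl: "closed C - {s} \<subseteq> closed C'"
    and op: "opn C' = opn C - {#p#} + N" and N: "\<forall>e \<in># N. fst e = s \<and> key p \<le> key e"
    and cov_s: "s \<notin> closed C' \<Longrightarrow> h s (ih C') < \<infinity> \<Longrightarrow>
                 \<exists>hh \<le> h s (ih C'). (s, gval (ip C) s, hh) \<in># N"
  shows "astar_inv TS \<sigma>h h C'"
proof -
  have ks: "known C \<subseteq> St TS" and ok: "\<forall>e \<in># opn C. fst e \<in> known C"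
    and so: "sorted (map key (popped C))"
    and below: "\<forall>x \<in> set (popped C). \<forall>e \<in># opn C. key x \<le> key e"
    using inv unfolding astar_inv_def by auto
  have new_open: "e \<in># opn C \<or> e \<in># N" if "e \<in># opn C'" for e
    using that op by (metis in_diffD union_iff)
  have p_below: "key p \<le> key e" if "e \<in># opn C'" for e
    using new_open[OF that] N p(2) by auto
  have open_known: "fst e \<in> known C'" if "e \<in># opn C'" for e
    using new_open[OF that] N ok p kn by auto
  have popped_below: "key x \<le> key e" if "x \<in> set (popped C')" "e \<in># opn C'" for x e
  proof -
    have "key x \<le> key p" using that(1) pop below p(1) by auto
    then show ?thesis using p_below[OF that(2)] by (rule order.trans)
  qed
  have "sorted (map key (popped C'))" using so pop below p(1) by (auto simp: sorted_append)
  moreover have "open_covers h C'"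
    using open_covers_pop[OF _ ks p(3) ip kn hm cl op cov_s] inv by (auto simp: astar_inv_def)
  ultimately show ?thesis
    using inv ri ip kn open_known popped_below unfolding astar_inv_def by auto
qed

lemma expand_succ_fields:
  fixes TS :: "('s,'l) tsys" and \<sigma>h :: "('i,'s,'l) isrc" and C :: "('s,'l,'i) cfg"
    and h :: "'s \<Rightarrow> 'i \<Rightarrow> ereal" and s s' :: 's and l :: 'l
  defines "ip' \<equiv> upd_parent TS (ip C) (s,l,s')" and "ih' \<equiv> upd \<sigma>h (ih C) (s,l,s')"
    and "ins \<equiv> h s' (upd \<sigma>h (ih C) (s,l,s')) \<noteq> \<infinity>
                \<and> (s' \<notin> known C \<or> gval (upd_parent TS (ip C) (s,l,s')) s' < gval (ip C) s')"
    and "R \<equiv> expand_succ TS \<sigma>h h (s,l,s') C"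
  shows "ip R = ip'" "ih R = ih'" "known R = insert s' (known C)" "popped R = popped C"
    "opn R = opn C + (if ins then {#(s', gval ip' s', h s' ih')#} else {#})"
    "closed R = (if ins \<and> s' \<in> known C then closed C - {s'} else closed C)"
  unfolding R_def expand_succ_def ip'_def ih'_def ins_def by (auto simp: Let_def)

lemma open_covers_expand_succ:
  assumes mon: "dyn_monotonic TS \<sigma>h h" and tr: "(s,l,s') \<in> Tr TS"
    and ri: "reach_info TS \<sigma>h (ih C) (known C)" and ks: "known C \<subseteq> St TS"
    and dm: "dom (ip C) = known C" and cov: "open_covers h C" and s: "s \<in> known C"
  shows "open_covers h (expand_succ TS \<sigma>h h (s,l,s') C)" (is "open_covers h ?R")
  unfolding open_covers_def
proof (intro ballI impI)
  note R = expand_succ_fields[where TS=TS and \<sigma>h=\<sigma>h and C=C and h=h and s=s and s'=s' and l=l]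
  have ps: "s \<in> dom (ip C)" using dm s by simp
  have hm: "h u (ih C) \<le> h u (ih ?R)" if "u \<in> known C" for u
    using dyn_monotonic_upd[OF mon ri _ tr] ks that R(2) by auto
  fix u assume u: "u \<in> known ?R - closed ?R" and fin: "h u (ih ?R) < \<infinity>"
  show "\<exists>hh \<le> h u (ih ?R). (u, gval (ip ?R) u, hh) \<in># opn ?R"
  proof (cases "u \<in> known C - closed C \<and> gval (ip ?R) u = gval (ip C) u")
    case True
    have "h u (ih C) < \<infinity>" using hm True fin by (blast intro: order.strict_trans1)
    then obtain hh where "hh \<le> h u (ih C)" "(u, gval (ip C) u, hh) \<in># opn C"
      using cov True unfolding open_covers_def by blast
    then show ?thesis using True hm R(5) by (auto intro: order.trans)
  next
    case False
    have g_other: "gval (ip ?R) u = gval (ip C) u" if "u \<noteq> s'"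
      using that R(1) by (simp add: gval_def upd_parent_other)
    have g_target: "gval (ip ?R) s' \<le> gval (ip C) s'" if "s' \<in> known C"
      using gval_upd_parent_target[OF ps] dm that R(1) by auto
    have us: "u = s'"
    proof (rule ccontr)
      assume "u \<noteq> s'"
      then have "u \<in> known C - closed C" using u R(3,6) by (auto split: if_splits)
      then show False using False g_other \<open>u \<noteq> s'\<close> by blast
    qed
    have improved: "s' \<notin> known C \<or> gval (ip ?R) s' < gval (ip C) s'"
    proof (rule ccontr)
      assume "\<not> ?thesis"
      then have known: "s' \<in> known C" and same: "gval (ip ?R) s' = gval (ip C) s'"
        using g_target by force+
      then have "closed ?R = closed C" using R(1,6) by simp
      then have "s' \<in> known C - closed C" using known u us by simp
      then show False using False us same by blast
    qed
    have "h s' (ih ?R) \<noteq> \<infinity>" using fin us by simp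
    then have "(s', gval (ip ?R) s', h s' (ih ?R)) \<in># opn ?R"
      using improved R(1,2,5) by simp
    then show ?thesis using us by blast
  qed
qed

lemma key_bound_improved_succ:
  assumes "k \<le> ereal (gval P s) + x" and "x \<le> ereal (cost TS l) + x'" and "s \<in> dom P"
    and "s' \<notin> dom P \<or> gval (upd_parent TS P (s,l,s')) s' < gval P s'"
  shows "k \<le> ereal (gval (upd_parent TS P (s,l,s')) s') + x'"
proof -
  have "k \<le> ereal (gval P s) + (ereal (cost TS l) + x')"
    using assms(1,2) by (auto intro: order.trans add_left_mono)
  also have "\<dots> = ereal (gval (upd_parent TS P (s,l,s')) s') + x'"
    using gval_upd_parent_improved[OF assms(3,4)] by (simp add: add.assoc[symmetric])
  finally show ?thesis .
qed

text \<open>k is the key popped for s; the last conjunct survives the processing of the successors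
  because g(s) and h(s) can only grow.\<close>
definition expansion_inv ::
  "('s,'l) tsys \<Rightarrow> ('i,'s,'l) isrc \<Rightarrow> ('s \<Rightarrow> 'i \<Rightarrow> ereal) \<Rightarrow> ereal \<Rightarrow> 's
     \<Rightarrow> ('s,'l,'i) cfg \<Rightarrow> bool" where
  "expansion_inv TS \<sigma>h h k s C \<longleftrightarrow> astar_inv TS \<sigma>h h C \<and> s \<in> known C
     \<and> (\<forall>x \<in> set (popped C). key x \<le> k) \<and> k \<le> ereal (gval (ip C) s) + h s (ih C)"

lemma expansion_inv_expand_succ:
  assumes wf: "wf_tsys TS" and mon: "dyn_monotonic TS \<sigma>h h" and con: "dyn_consistent TS \<sigma>h h"
    and inv: "expansion_inv TS \<sigma>h h k s C" and tr: "(s,l,s') \<in> Tr TS"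
  shows "expansion_inv TS \<sigma>h h k s (expand_succ TS \<sigma>h h (s,l,s') C)" (is "expansion_inv _ _ _ _ _ ?R")
proof -
  note R = expand_succ_fields[where TS=TS and \<sigma>h=\<sigma>h and C=C and h=h and s=s and s'=s' and l=l]
  have ri: "reach_info TS \<sigma>h (ih C) (known C)" and ks: "known C \<subseteq> St TS"
    and dm: "dom (ip C) = known C" and ok: "\<forall>e \<in># opn C. fst e \<in> known C"
    and cov: "open_covers h C" and so: "sorted (map key (popped C))"
    and below: "\<forall>x \<in> set (popped C). \<forall>e \<in># opn C. key x \<le> key e"
    and s: "s \<in> known C" and pk: "\<forall>x \<in> set (popped C). key x \<le> k"
    and k: "k \<le> ereal (gval (ip C) s) + h s (ih C)"
    using inv unfolding expansion_inv_def astar_inv_def by auto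
  have ps: "s \<in> dom (ip C)" using dm s by simp
  have sS: "s \<in> St TS" and s'S: "s' \<in> St TS" and c: "cost TS l \<ge> 0"
    using wf tr unfolding wf_tsys_def by auto
  have ri': "reach_info TS \<sigma>h (ih ?R) (known ?R)"
    using reach_info.update[OF ri tr s] R(2,3) by simp
  have k': "k \<le> ereal (gval (ip C) s) + h s (ih ?R)"
    using k dyn_monotonic_upd[OF mon ri sS tr] R(2) by (auto intro: order.trans add_left_mono)
  have "gval (ip C) s \<le> gval (ip ?R) s"
    using gval_upd_parent_source[OF ps c] R(1) by simp
  then have "k \<le> ereal (gval (ip ?R) s) + h s (ih ?R)"
    using k' by (meson add_right_mono ereal_less_eq(3) order.trans)
  moreover have new_key: "k \<le> ereal (gval (ip ?R) s') + h s' (ih ?R)"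
    if "s' \<notin> known C \<or> gval (ip ?R) s' < gval (ip C) s'"
    using key_bound_improved_succ[OF k' dyn_consistent_trans[OF con ri' tr] ps] that dm R(1) by simp
  have "key x \<le> key e" if x: "x \<in> set (popped ?R)" and e: "e \<in># opn ?R" for x e
  proof (cases "e \<in># opn C")
    case True
    then show ?thesis using x below R(4) by auto
  next
    case False
    then have "e = (s', gval (ip ?R) s', h s' (ih ?R))"
      and "s' \<notin> known C \<or> gval (ip ?R) s' < gval (ip C) s'"
      using e R(1,2,5) by (auto split: if_splits)
    moreover have "key x \<le> k" using pk x R(4) by auto
    ultimately show ?thesis using new_key by (auto simp: key_def intro: order.trans)
  qed
  moreover have "open_covers h ?R" using open_covers_expand_succ[OF mon tr ri ks dm cov s] .
  moreover have "dom (ip ?R) = known ?R" using dom_upd_parent[OF ps] dm R(1,3) by simp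
  ultimately show ?thesis
    using ri' ks s'S ok so s pk R(3,4,5) unfolding expansion_inv_def astar_inv_def by auto
qed

lemma expansion_inv_fold:
  assumes wf: "wf_tsys TS" and mon: "dyn_monotonic TS \<sigma>h h" and con: "dyn_consistent TS \<sigma>h h"
    and ts: "\<forall>t \<in> set ts. t \<in> Tr TS \<and> fst t = s" and inv: "expansion_inv TS \<sigma>h h k s C"
  shows "expansion_inv TS \<sigma>h h k s (fold (expand_succ TS \<sigma>h h) ts C)"
  using ts inv
proof (induction ts arbitrary: C)
  case (Cons t ts)
  obtain l s' where t: "t = (s,l,s')" and tr: "(s,l,s') \<in> Tr TS"
    using Cons.prems(1) by (cases t) auto
  show ?case
    using Cons.IH Cons.prems expansion_inv_expand_succ[OF wf mon con Cons.prems(2) tr] t by simp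
qed simp

lemma refine_popped_state:
  assumes mon: "dyn_monotonic TS \<sigma>h h" and inv: "astar_inv TS \<sigma>h h C" and p: "(s,g,hh) \<in># opn C"
  shows "s \<in> known C" and "reach_info TS \<sigma>h (rfn \<sigma>h (ih C) s) (known C)"
    and "\<forall>u \<in> St TS. h u (ih C) \<le> h u (rfn \<sigma>h (ih C) s)"
proof -
  have ri: "reach_info TS \<sigma>h (ih C) (known C)" and ks: "known C \<subseteq> St TS"
    and ok: "\<forall>e \<in># opn C. fst e \<in> known C"
    using inv unfolding astar_inv_def by auto
  show s: "s \<in> known C" using ok p by force
  show "reach_info TS \<sigma>h (rfn \<sigma>h (ih C) s) (known C)" using ri s by (rule reach_info.refine)
  show "\<forall>u \<in> St TS. h u (ih C) \<le> h u (rfn \<sigma>h (ih C) s)"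
    using dyn_monotonic_rfn[OF mon ri] s ks by auto
qed

lemma astar_inv_step:
  assumes wf: "wf_tsys TS" and mon: "dyn_monotonic TS \<sigma>h h" and con: "dyn_consistent TS \<sigma>h h"
    and step: "astar_step TS \<sigma>h h reeval C C'" and inv: "astar_inv TS \<sigma>h h C"
  shows "astar_inv TS \<sigma>h h C'"
  using step
proof cases
  case (pop_closed s g hh)
  show ?thesis
    by (rule astar_inv_pop[OF inv pop_closed(3,4), where s=s and N="{#}"])
       (use pop_closed inv in \<open>auto simp: astar_inv_def\<close>)
next
  case (pop_reeval s g hh ih1 ip1)
  note refined = refine_popped_state[OF mon inv pop_reeval(3)]
  have "key (s,g,hh) \<le> ereal (gval (ip C) s) + h s ih1"
    using open_covers_min_key_le[of h C s "(s,g,hh)"] inv refined pop_reeval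
    by (auto simp: astar_inv_def)
  then show ?thesis
    by (rule_tac astar_inv_pop[OF inv pop_reeval(3,4), where s=s
          and N="if h s ih1 < \<infinity> then {#(s, gval (ip C) s, h s ih1)#} else {#}"])
       (use pop_reeval refined in \<open>auto simp: key_def\<close>)
next
  case (pop_goal s g hh ih1 ip1)
  note refined = refine_popped_state[OF mon inv pop_goal(3)]
  show ?thesis
    by (rule astar_inv_pop[OF inv pop_goal(3,4), where s=s and N="{#}"])
       (use pop_goal refined in auto)
next
  case (pop_expand s g hh ih1 ip1 ts)
  note refined = refine_popped_state[OF mon inv pop_expand(3)]
  define C0 where "C0 = C\<lparr> ip := ip1, ih := ih1, closed := insert s (closed C),
                  opn := opn C - {#(s,g,hh)#}, popped := popped C @ [(s,g,hh)] \<rparr>"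
  have "astar_inv TS \<sigma>h h C0"
    unfolding C0_def
    by (rule astar_inv_pop[OF inv pop_expand(3,4), where s=s and N="{#}"])
       (use pop_expand refined in auto)
  moreover have "key (s,g,hh) \<le> ereal (gval (ip C) s) + h s ih1"
    using open_covers_min_key_le[of h C s "(s,g,hh)"] inv refined pop_expand
    by (auto simp: astar_inv_def)
  moreover have "\<forall>x \<in> set (popped C). key x \<le> key (s,g,hh)"
    using inv pop_expand(3) by (auto simp: astar_inv_def)
  ultimately have "expansion_inv TS \<sigma>h h (key (s,g,hh)) s C0"
    using refined(1) pop_expand(7) unfolding expansion_inv_def by (simp add: C0_def)
  then have "expansion_inv TS \<sigma>h h (key (s,g,hh)) s (fold (expand_succ TS \<sigma>h h) ts C0)"
    using expansion_inv_fold[OF wf mon con] pop_expand(11) by auto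
  then show ?thesis using pop_expand(1) unfolding expansion_inv_def C0_def by simp
qed

theorem theorem6:
  fixes TS :: "('s,'l) tsys" and \<sigma>h :: "('i,'s,'l) isrc"
    and h :: "'s \<Rightarrow> 'i \<Rightarrow> ereal" and reeval :: bool
    and C :: "('s,'l,'i) cfg"
  assumes "wf_tsys TS"
    and "dyn_heuristic h"
    and "dyn_admissible TS \<sigma>h h"
    and "dyn_monotonic TS \<sigma>h h"
    and "dyn_consistent TS \<sigma>h h"
    and "(astar_step TS \<sigma>h h reeval)\<^sup>*\<^sup>* (astar_init TS \<sigma>h h) C"
  shows "sorted (map key (popped C))"
proof -
  have "astar_inv TS \<sigma>h h C"
    using assms(6)
  proof (induction rule: rtranclp_induct)
    case base
    show ?case using astar_inv_init[OF assms(1)] .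
  next
    case (step C C')
    then show ?case using astar_inv_step[OF assms(1,4,5)] by blast
  qed
  then show ?thesis unfolding astar_inv_def by simp
qed

end
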